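(* Let $\odot$ be a non-degenerate pseudo-multiplication and let $\tau$ be a $\sigma$-maxitive measure on a $\sigma$-algebra $\mathcal{B}$ on a nonempty set $E$ having the Radon–Nikodym property with respect to the idempotent $\odot$-integral. Then $\tau$ is localizable.
   Context: Write $\overline{\mathbb{R}}_+=[0,\infty]$. A pseudo-multiplication is a binary operation $\odot$ on $\overline{\mathbb{R}}_+$ with the following properties: - it is associative; - it is continuous on $(0,\infty)\times[0,\infty]$; - for every $t$, the map $s\mapsto s\odot t$ is continuous on $(0,\infty]$; - it is nondecreasing in each argument; - it has a left identity $1_\odot$, i.e. $1_\odot\odot t=t$ for all $t$; - it has no zero divisors, i.e. $s\odot t=0$ implies $s=0$ or $t=0$; - $0\odot t=t\odot 0=0$ for all $t$. Put $O(t)=\inf_{s>0}s\odot t$. An element $t$ is $\odot$-finite if $O(t)=0$, and $\odot$-infinite otherwise. The operation $\odot$ is non-degenerate if $1_\odot$ is $\odot$-finite. A $\sigma$-maxitive measure on $\mathcal{B}$ is a map $\nu:\mathcal{B}\to\overline{\mathbb{R}}_+$ with $\nu(\emptyset)=0$ and $\nu(\bigcup_j B_j)=\sup_j\nu(B_j)$ for every countable family. A set is $\tau$-negligible if it is contained in some $B\in\mathcal{B}$ with $\tau(B)=0$. A $\sigma$-ideal of $\mathcal{B}$ is a nonempty subfamily closed under countable unions and under passing to measurable subsets. A map $f:E\to\overline{\mathbb{R}}_+$ is $\mathcal{B}$-measurable if $\{f>t\}\in\mathcal{B}$ for all $t\in[0,\infty)$. The idempotent $\odot$-integral is $\int^\infty_B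 f\odot d\tau=\sup_{t\in[0,\infty)}t\odot\tau(B\cap\{f>t\})$. $\nu\ll_\odot\tau$ means $\nu(B)\le\infty\odot\tau(B)$ for every $B\in\mathcal{B}$ with $\tau(B)$ $\odot$-finite. $\tau$ has the Radon–Nikodym property if every $\sigma$-maxitive $\nu\ll_\odot\tau$ admits a $\mathcal{B}$-measurable $c:E\to\overline{\mathbb{R}}_+$ with $\nu(B)=\int^\infty_B c\odot d\tau$ for all $B\in\mathcal{B}$. $\tau$ is localizable if for every $\sigma$-ideal $\mathcal{I}$ of $\mathcal{B}$ there is $L\in\mathcal{B}$ such that: - $S\setminus L$ is $\tau$-negligible for all $S\in\mathcal{I}$; - whenever $B\in\mathcal{B}$ satisfies that $S\setminus B$ is $\tau$-negligible for all $S\in\mathcal{I}$, the set $L\setminus B$ is $\tau$-negligible. *)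

theory Defs
  imports "HOL-Analysis.Analysis"
begin

text \<open>The extended half-line [0,\<infinity>] is modelled by the type ennreal.
  A pseudo-multiplication is given by the operation op together with a
  chosen left identity e (the element 1 of the paper).\<close>

definition pseudo_mult :: "(ennreal \<Rightarrow> ennreal \<Rightarrow> ennreal) \<Rightarrow> ennreal \<Rightarrow> bool" where
  "pseudo_mult op e \<longleftrightarrow>
     (\<forall>a b c. op (op a b) c = op a (op b c)) \<and>
     continuous_on ({0<..<top} \<times> UNIV) (\<lambda>p. op (fst p) (snd p)) \<and>
     (\<forall>t. continuous_on {0<..} (\<lambda>s. op s t)) \<and>
     (\<forall>s s' t. s \<le> s' \<longrightarrow> op s t \<le> op s' t) \<and>
     (\<forall>s t t'. t \<le> t' \<longrightarrow> op s t \<le> op s t') \<and>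
     (\<forall>t. op e t = t) \<and>
     (\<forall>s t. op s t = 0 \<longrightarrow> s = 0 \<or> t = 0) \<and>
     (\<forall>t. op 0 t = 0 \<and> op t 0 = 0)"

definition O_pm :: "(ennreal \<Rightarrow> ennreal \<Rightarrow> ennreal) \<Rightarrow> ennreal \<Rightarrow> ennreal" where
  "O_pm op t = (INF s\<in>{0<..}. op s t)"

definition pm_finite :: "(ennreal \<Rightarrow> ennreal \<Rightarrow> ennreal) \<Rightarrow> ennreal \<Rightarrow> bool" where
  "pm_finite op t \<longleftrightarrow> O_pm op t = 0"

definition non_degenerate :: "(ennreal \<Rightarrow> ennreal \<Rightarrow> ennreal) \<Rightarrow> ennreal \<Rightarrow> bool" where
  "non_degenerate op e \<longleftrightarrow> pm_finite op e"

definition sigma_maxitive :: "'a set set \<Rightarrow> ('a set \<Rightarrow> ennreal) \<Rightarrow> bool" where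
  "sigma_maxitive B \<nu> \<longleftrightarrow> \<nu> {} = 0 \<and>
     (\<forall>Bs :: nat \<Rightarrow> 'a set. range Bs \<subseteq> B \<longrightarrow> \<nu> (\<Union>j. Bs j) = (SUP j. \<nu> (Bs j)))"

definition negligible_wrt :: "'a set set \<Rightarrow> ('a set \<Rightarrow> ennreal) \<Rightarrow> 'a set \<Rightarrow> bool" where
  "negligible_wrt B \<tau> A \<longleftrightarrow> (\<exists>C\<in>B. A \<subseteq> C \<and> \<tau> C = 0)"

definition sigma_ideal :: "'a set set \<Rightarrow> 'a set set \<Rightarrow> bool" where
  "sigma_ideal B I \<longleftrightarrow> I \<subseteq> B \<and> I \<noteq> {} \<and>
     (\<forall>Ss :: nat \<Rightarrow> 'a set. range Ss \<subseteq> I \<longrightarrow> (\<Union>j. Ss j) \<in> I) \<and>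
     (\<forall>S\<in>I. \<forall>A\<in>B. A \<subseteq> S \<longrightarrow> A \<in> I)"

definition B_measurable :: "'a set \<Rightarrow> 'a set set \<Rightarrow> ('a \<Rightarrow> ennreal) \<Rightarrow> bool" where
  "B_measurable E B f \<longleftrightarrow> (\<forall>t. t < top \<longrightarrow> {x\<in>E. t < f x} \<in> B)"

definition idem_integral ::
  "(ennreal \<Rightarrow> ennreal \<Rightarrow> ennreal) \<Rightarrow> 'a set \<Rightarrow> ('a set \<Rightarrow> ennreal) \<Rightarrow> 'a set \<Rightarrow> ('a \<Rightarrow> ennreal) \<Rightarrow> ennreal" where
  "idem_integral op E \<tau> C f = (SUP t\<in>{0..<top}. op t (\<tau> (C \<inter> {x\<in>E. t < f x})))"

definition pm_abs_cont ::
  "(ennreal \<Rightarrow> ennreal \<Rightarrow> ennreal) \<Rightarrow> 'a set set \<Rightarrow> ('a set \<Rightarrow> ennreal) \<Rightarrow> ('a set \<Rightarrow> ennreal) \<Rightarrow> bool" where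
  "pm_abs_cont op B \<nu> \<tau> \<longleftrightarrow> (\<forall>C\<in>B. pm_finite op (\<tau> C) \<longrightarrow> \<nu> C \<le> op top (\<tau> C))"

definition radon_nikodym_property ::
  "(ennreal \<Rightarrow> ennreal \<Rightarrow> ennreal) \<Rightarrow> 'a set \<Rightarrow> 'a set set \<Rightarrow> ('a set \<Rightarrow> ennreal) \<Rightarrow> bool" where
  "radon_nikodym_property op E B \<tau> \<longleftrightarrow>
     (\<forall>\<nu>. sigma_maxitive B \<nu> \<and> pm_abs_cont op B \<nu> \<tau> \<longrightarrow>
        (\<exists>c. B_measurable E B c \<and> (\<forall>C\<in>B. \<nu> C = idem_integral op E \<tau> C c)))"

definition localizable :: "'a set set \<Rightarrow> ('a set \<Rightarrow> ennreal) \<Rightarrow> bool" where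
  "localizable B \<tau> \<longleftrightarrow>
     (\<forall>I. sigma_ideal B I \<longrightarrow>
        (\<exists>L\<in>B. (\<forall>S\<in>I. negligible_wrt B \<tau> (S - L)) \<and>
               (\<forall>C\<in>B. (\<forall>S\<in>I. negligible_wrt B \<tau> (S - C)) \<longrightarrow> negligible_wrt B \<tau> (L - C))))"

end

theory Submission
  imports Defs
begin

text \<open>Given a \<sigma>-ideal I, the set function \<nu>(C) = sup_{S\<in>I} \<tau>(C \<inter> S) is \<sigma>-maxitive and
  bounded by \<tau>, hence absolutely continuous with respect to \<tau>. A density c of \<nu> then
  localizes I at its positivity set L = {c > 0}: off L the integral of c vanishes, so each
  S - L is \<nu>-null and therefore \<tau>-null; and if every S - C is \<tau>-negligible then L - C is
  \<nu>-null, and since the pseudo-multiplication has no zero divisors, the vanishing integral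
  forces each level set {c > 1/(n+1)} \<inter> (L - C), hence their union L - C, to be \<tau>-null.\<close>

lemma sigma_maxitive_empty:
  "sigma_maxitive B \<tau> \<Longrightarrow> \<tau> {} = 0"
  unfolding sigma_maxitive_def by simp

lemma sigma_maxitive_Union:
  fixes Bs :: "nat \<Rightarrow> 'a set"
  shows "sigma_maxitive B \<tau> \<Longrightarrow> range Bs \<subseteq> B \<Longrightarrow> \<tau> (\<Union>j. Bs j) = (SUP j. \<tau> (Bs j))"
  unfolding sigma_maxitive_def by blast

lemma sigma_maxitive_mono:
  assumes "sigma_maxitive B \<tau>" "A \<in> B" "C \<in> B" "A \<subseteq> C"
  shows "\<tau> A \<le> \<tau> C"
proof -
  let ?Bs = "\<lambda>j::nat. if j = 0 then A else C"
  have "range ?Bs \<subseteq> B"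
    using assms(2,3) by auto
  moreover have "(\<Union>j. ?Bs j) = C"
    using assms(4) by (auto split: if_splits)
  ultimately have "\<tau> C = (SUP j. \<tau> (?Bs j))"
    using sigma_maxitive_Union[OF assms(1)] by metis
  moreover have "\<tau> A \<le> (SUP j. \<tau> (?Bs j))"
    by (rule SUP_upper2[of 0]) auto
  ultimately show ?thesis by simp
qed

lemma negligible_wrt_iff_null:
  assumes "sigma_maxitive B \<tau>" "A \<in> B"
  shows "negligible_wrt B \<tau> A \<longleftrightarrow> \<tau> A = 0"
proof
  assume "negligible_wrt B \<tau> A"
  then obtain N where "N \<in> B" "A \<subseteq> N" "\<tau> N = 0"
    unfolding negligible_wrt_def by blast
  then show "\<tau> A = 0"
    using sigma_maxitive_mono[OF assms] by (metis le_zero_eq)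
next
  assume "\<tau> A = 0"
  then show "negligible_wrt B \<tau> A"
    using assms(2) unfolding negligible_wrt_def by blast
qed

lemma sigma_ideal_subset: "sigma_ideal B I \<Longrightarrow> S \<in> I \<Longrightarrow> S \<in> B"
  unfolding sigma_ideal_def by auto

definition ideal_trace :: "'a set set \<Rightarrow> ('a set \<Rightarrow> ennreal) \<Rightarrow> 'a set \<Rightarrow> ennreal" where
  "ideal_trace I \<tau> C = (SUP S\<in>I. \<tau> (C \<inter> S))"

lemma sigma_maxitive_ideal_trace:
  assumes "sigma_maxitive B \<tau>" "sigma_ideal B I" "sigma_algebra E B"
  shows "sigma_maxitive B (ideal_trace I \<tau>)"
  unfolding sigma_maxitive_def
proof (intro conjI allI impI)
  have "I \<noteq> {}"
    using assms(2) unfolding sigma_ideal_def by simp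
  then show "ideal_trace I \<tau> {} = 0"
    unfolding ideal_trace_def using sigma_maxitive_empty[OF assms(1)] by simp
next
  interpret sigma_algebra E B by (fact assms(3))
  fix Bs :: "nat \<Rightarrow> 'a set"
  assume Bs: "range Bs \<subseteq> B"
  have "ideal_trace I \<tau> (\<Union>j. Bs j) = (SUP S\<in>I. \<tau> (\<Union>j. Bs j \<inter> S))"
    unfolding ideal_trace_def by (simp add: Int_UN_distrib2)
  also have "\<dots> = (SUP S\<in>I. SUP j. \<tau> (Bs j \<inter> S))"
  proof (rule SUP_cong[OF refl])
    fix S assume "S \<in> I"
    then have "range (\<lambda>j. Bs j \<inter> S) \<subseteq> B"
      using Bs sigma_ideal_subset[OF assms(2)] by (auto intro: Int)
    then show "\<tau> (\<Union>j. Bs j \<inter> S) = (SUP j. \<tau> (Bs j \<inter> S))"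
      by (rule sigma_maxitive_Union[OF assms(1)])
  qed
  also have "\<dots> = (SUP j. ideal_trace I \<tau> (Bs j))"
    unfolding ideal_trace_def by (rule SUP_commute)
  finally show "ideal_trace I \<tau> (\<Union>j. Bs j) = (SUP j. ideal_trace I \<tau> (Bs j))" .
qed

lemma ideal_trace_le:
  assumes "sigma_maxitive B \<tau>" "sigma_ideal B I" "sigma_algebra E B" "C \<in> B"
  shows "ideal_trace I \<tau> C \<le> \<tau> C"
  unfolding ideal_trace_def
proof (rule SUP_least)
  interpret sigma_algebra E B by (fact assms(3))
  fix S assume "S \<in> I"
  then have "C \<inter> S \<in> B"
    using assms(4) sigma_ideal_subset[OF assms(2)] by (intro Int)
  then show "\<tau> (C \<inter> S) \<le> \<tau> C"
    using sigma_maxitive_mono[OF assms(1)] assms(4) by blast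
qed

lemma ideal_trace_ge:
  "S \<in> I \<Longrightarrow> A \<subseteq> S \<Longrightarrow> \<tau> A \<le> ideal_trace I \<tau> A"
  unfolding ideal_trace_def by (rule SUP_upper2) (auto simp: Int_absorb2)

lemma ideal_trace_eq_0:
  assumes "sigma_maxitive B \<tau>" "sigma_ideal B I" "sigma_algebra E B" "A \<in> B"
    and "\<And>S. S \<in> I \<Longrightarrow> negligible_wrt B \<tau> (S - C)" "A \<inter> C = {}"
  shows "ideal_trace I \<tau> A = 0"
  unfolding ideal_trace_def
proof (rule antisym[OF SUP_least])
  interpret sigma_algebra E B by (fact assms(3))
  fix S assume "S \<in> I"
  then obtain N where N: "N \<in> B" "S - C \<subseteq> N" "\<tau> N = 0"
    using assms(5) unfolding negligible_wrt_def by blast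
  have "A \<inter> S \<in> B"
    using assms(4) sigma_ideal_subset[OF assms(2) \<open>S \<in> I\<close>] by (rule Int)
  moreover have "A \<inter> S \<subseteq> N"
    using N(2) assms(6) by blast
  ultimately show "\<tau> (A \<inter> S) \<le> 0"
    using sigma_maxitive_mono[OF assms(1) _ N(1)] N(3) by metis
qed simp

lemma pm_abs_cont_of_le:
  assumes "\<And>s s' t. s \<le> s' \<Longrightarrow> op s t \<le> op s' t" "\<And>t. op e t = t"
    and "\<And>C. C \<in> B \<Longrightarrow> \<nu> C \<le> \<tau> C"
  shows "pm_abs_cont op B \<nu> \<tau>"
  unfolding pm_abs_cont_def
proof (intro ballI impI)
  fix C assume "C \<in> B"
  have "\<tau> C = op e (\<tau> C)"
    by (simp add: assms(2))
  also have "\<dots> \<le> op top (\<tau> C)"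
    by (rule assms(1)) simp
  finally show "\<nu> C \<le> op top (\<tau> C)"
    using assms(3)[OF \<open>C \<in> B\<close>] by simp
qed

lemma idem_integral_eq_0_if_disjoint_positive:
  assumes "\<And>t. op t 0 = 0" "\<tau> {} = 0" "C \<inter> {x\<in>E. 0 < c x} = {}"
  shows "idem_integral op E \<tau> C c = 0"
  unfolding idem_integral_def
proof (rule antisym[OF SUP_least])
  fix t :: ennreal
  have "C \<inter> {x\<in>E. t < c x} = {}"
    using assms(3) by (auto intro: le_less_trans[OF zero_le])
  then show "op t (\<tau> (C \<inter> {x\<in>E. t < c x})) \<le> 0"
    by (simp add: assms(1,2))
qed simp

lemma positive_set_eq_UN_level_sets:
  fixes c :: "'a \<Rightarrow> ennreal"
  shows "{x\<in>E. 0 < c x} = (\<Union>n. {x\<in>E. ennreal (1 / Suc n) < c x})"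
proof (intro equalityI subsetI)
  fix x assume x: "x \<in> {x\<in>E. 0 < c x}"
  obtain n :: nat where "ennreal (1 / Suc n) < c x"
  proof (cases "c x")
    case (real r)
    with x have "0 < r"
      by (simp add: ennreal_less_zero_iff)
    then obtain n :: nat where "1 / Suc n < r"
      by (metis nat_approx_posE)
    with real that[of n] ennreal_lessI[OF \<open>0 < r\<close>] show ?thesis
      by simp
  qed (use that[of 0] in simp)
  with x show "x \<in> (\<Union>n. {x\<in>E. ennreal (1 / Suc n) < c x})"
    by blast
next
  fix x assume "x \<in> (\<Union>n. {x\<in>E. ennreal (1 / Suc n) < c x})"
  then obtain n :: nat where "x \<in> E" "ennreal (1 / Suc n) < c x"
    by blast
  then show "x \<in> {x\<in>E. 0 < c x}"
    using le_less_trans[OF zero_le] by blast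
qed

lemma idem_integral_eq_0_imp_null:
  assumes "\<And>s t. op s t = 0 \<Longrightarrow> s = 0 \<or> t = 0"
    and "sigma_maxitive B \<tau>" "sigma_algebra E B" "B_measurable E B c" "C \<in> B"
    and "idem_integral op E \<tau> C c = 0"
  shows "\<tau> (C \<inter> {x\<in>E. 0 < c x}) = 0"
proof -
  interpret sigma_algebra E B by (fact assms(3))
  define Bs where "Bs n = C \<inter> {x\<in>E. ennreal (1 / Suc n) < c x}" for n :: nat
  have "range Bs \<subseteq> B"
    using assms(4,5) unfolding Bs_def B_measurable_def by auto
  moreover have null: "\<tau> (Bs n) = 0" for n
  proof -
    have "op (ennreal (1 / Suc n)) (\<tau> (Bs n)) \<le> idem_integral op E \<tau> C c"
      unfolding idem_integral_def Bs_def by (rule SUP_upper) auto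
    with assms(1,6) show ?thesis
      by fastforce
  qed
  ultimately have "\<tau> (\<Union>n. Bs n) = 0"
    by (simp add: sigma_maxitive_Union[OF assms(2)] null)
  moreover have "(\<Union>n. Bs n) = C \<inter> {x\<in>E. 0 < c x}"
    unfolding Bs_def positive_set_eq_UN_level_sets[of E c] by blast
  ultimately show ?thesis
    by simp
qed

lemma localizes_ideal_at_positive_set_of_density:
  assumes pm: "pseudo_mult op e"
    and \<tau>: "sigma_maxitive B \<tau>" and B: "sigma_algebra E B" and I: "sigma_ideal B I"
    and c: "B_measurable E B c" "\<And>C. C \<in> B \<Longrightarrow> ideal_trace I \<tau> C = idem_integral op E \<tau> C c"
  defines "L \<equiv> {x\<in>E. 0 < c x}"
  shows "L \<in> B" "\<And>S. S \<in> I \<Longrightarrow> negligible_wrt B \<tau> (S - L)"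
    "\<And>C. C \<in> B \<Longrightarrow> (\<forall>S\<in>I. negligible_wrt B \<tau> (S - C)) \<Longrightarrow> negligible_wrt B \<tau> (L - C)"
proof -
  interpret sigma_algebra E B by (fact B)
  have no_zero_divisors: "\<And>s t. op s t = 0 \<Longrightarrow> s = 0 \<or> t = 0"
    and zero_right: "\<And>t. op t 0 = 0"
    using pm unfolding pseudo_mult_def by auto
  show LB: "L \<in> B"
    using c(1) unfolding B_measurable_def L_def by simp
  show "negligible_wrt B \<tau> (S - L)" if S: "S \<in> I" for S
  proof -
    have SL: "S - L \<in> B"
      using sigma_ideal_subset[OF I S] LB by (rule Diff)
    have "(S - L) \<inter> {x\<in>E. 0 < c x} = {}"
      unfolding L_def by blast
    then have "idem_integral op E \<tau> (S - L) c = 0"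
      by (intro idem_integral_eq_0_if_disjoint_positive zero_right sigma_maxitive_empty[OF \<tau>])
    then have "ideal_trace I \<tau> (S - L) = 0"
      using c(2)[OF SL] by simp
    then have "\<tau> (S - L) = 0"
      using ideal_trace_ge[OF S, of "S - L" \<tau>] by simp
    then show ?thesis
      using negligible_wrt_iff_null[OF \<tau> SL] by simp
  qed
  show "negligible_wrt B \<tau> (L - C)" if C: "C \<in> B" "\<forall>S\<in>I. negligible_wrt B \<tau> (S - C)" for C
  proof -
    have LC: "L - C \<in> B"
      using LB C(1) by (rule Diff)
    have "ideal_trace I \<tau> (L - C) = 0"
      using C(2) by (intro ideal_trace_eq_0[OF \<tau> I B LC]) blast+
    then have "idem_integral op E \<tau> (L - C) c = 0"
      using c(2)[OF LC] by simp
    then have "\<tau> ((L - C) \<inter> {x\<in>E. 0 < c x}) = 0"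
      by (rule idem_integral_eq_0_imp_null[rotated 5]) (fact no_zero_divisors \<tau> B c(1) LC)+
    moreover have "(L - C) \<inter> {x\<in>E. 0 < c x} = L - C"
      unfolding L_def by blast
    ultimately show ?thesis
      using negligible_wrt_iff_null[OF \<tau> LC] by simp
  qed
qed

theorem mainTheorem6:
  fixes op :: "ennreal \<Rightarrow> ennreal \<Rightarrow> ennreal" and e :: ennreal
    and E :: "'a set" and B :: "'a set set" and \<tau> :: "'a set \<Rightarrow> ennreal"
  assumes "pseudo_mult op e"
    and "non_degenerate op e"
    and "E \<noteq> {}"
    and "sigma_algebra E B"
    and "sigma_maxitive B \<tau>"
    and "radon_nikodym_property op E B \<tau>"
  shows "localizable B \<tau>"
  unfolding localizable_def
proof (intro allI impI)
  fix I assume I: "sigma_ideal B I"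
  have mono: "\<And>s s' t. s \<le> s' \<Longrightarrow> op s t \<le> op s' t" and identity: "\<And>t. op e t = t"
    using assms(1) unfolding pseudo_mult_def by auto
  have "pm_abs_cont op B (ideal_trace I \<tau>) \<tau>"
    by (intro pm_abs_cont_of_le[where e = e] mono identity ideal_trace_le[OF assms(5) I assms(4)])
  then obtain c where "B_measurable E B c"
      and "\<And>C. C \<in> B \<Longrightarrow> ideal_trace I \<tau> C = idem_integral op E \<tau> C c"
    using assms(6) sigma_maxitive_ideal_trace[OF assms(5) I assms(4)]
    unfolding radon_nikodym_property_def by blast
  note L = localizes_ideal_at_positive_set_of_density[OF assms(1,5,4) I this]
  show "\<exists>L\<in>B. (\<forall>S\<in>I. negligible_wrt B \<tau> (S - L)) \<and>
          (\<forall>C\<in>B. (\<forall>S\<in>I. negligible_wrt B \<tau> (S - C)) \<longrightarrow> negligible_wrt B \<tau> (L - C))"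
    using L(2,3) by (intro bexI[OF _ L(1)] conjI ballI impI)
qed

end
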